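(* Let $\overline{\mathscr{B}}\subset\mathcal{P}^{n-1}_r$ be a Borel set of monomials of degree $r$ in the variables $x_1,\ldots,x_n$, and let $\overline{\mathscr{N}}$ be its complement in $\mathcal{P}^{n-1}_r$. Let $\mathscr{N}\subset\mathcal{P}^n_r$ be the set of all monomials of degree $r$ in $x_0,\ldots,x_n$ that can be obtained from some element of $\overline{\mathscr{N}}$ by applying a finite (possibly empty) sequence of decreasing elementary moves. Then $$\mathscr{N}=\mathcal{P}^n_r\setminus\Big\{\big(\langle\overline{\mathscr{B}}\rangle^{\mathrm{sat}}\cdot\mathbb{K}[x_0,\ldots,x_n]\big)_r\Big\},$$ where $\langle\overline{\mathscr{B}}\rangle^{\mathrm{sat}}$ is the saturation of the ideal generated by $\overline{\mathscr{B}}$ in $\mathbb{K}[x_1,\ldots,x_n]$ and $\{(\cdot)_r\}$ denotes the set of monomials of degree $r$ in an ideal.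
   Context: Variables are ordered $x_n>\cdots>x_0$. $\mathcal{P}^n_r$ is the set of monomials of degree $r$ in $x_0,\ldots,x_n$, and $\mathcal{P}^{n-1}_r$ is identified with the set of monomials of degree $r$ in $x_1,\ldots,x_n$. A decreasing elementary move on a monomial $x^\alpha$ is the multiplication by $\frac{x_{j-1}}{x_j}$ for some $j\geq1$ with $x_j\mid x^\alpha$; an increasing elementary move is multiplication by $\frac{x_{i+1}}{x_i}$ with $x_i\mid x^\alpha$. A Borel set is a set of monomials of a fixed degree closed under increasing elementary moves. Saturation in $\mathbb{K}[x_1,\ldots,x_n]$ is with respect to the ideal $(x_1,\ldots,x_n)$. *)

theory Defs
  imports Main "HOL-Library.Poly_Mapping"
begin

text \<open>Monomials are exponent vectors \<open>nat \<Rightarrow>\<^sub>0 nat\<close> (x_i has exponent Poly_Mapping.lookup a i).\<close>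

type_synonym 'k mpoly = "(nat \<Rightarrow>\<^sub>0 nat) \<Rightarrow>\<^sub>0 'k"

definition mdeg :: "(nat \<Rightarrow>\<^sub>0 nat) \<Rightarrow> nat" where
  "mdeg a = (\<Sum>i\<in>Poly_Mapping.keys a. Poly_Mapping.lookup a i)"

definition monos_in :: "nat set \<Rightarrow> nat \<Rightarrow> (nat \<Rightarrow>\<^sub>0 nat) set" where
  "monos_in V r = {a. Poly_Mapping.keys a \<subseteq> V \<and> mdeg a = r}"

text \<open>P^n_r : variables x_0..x_n;  P^{n-1}_r : variables x_1..x_n.\<close>
abbreviation Pn :: "nat \<Rightarrow> nat \<Rightarrow> (nat \<Rightarrow>\<^sub>0 nat) set" where
  "Pn n r \<equiv> monos_in {0..n} r"
abbreviation Pn1 :: "nat \<Rightarrow> nat \<Rightarrow> (nat \<Rightarrow>\<^sub>0 nat) set" where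
  "Pn1 n r \<equiv> monos_in {1..n} r"

text \<open>Multiply a monomial by x_j / x_i (meaningful when x_i divides it).\<close>
definition emove :: "nat \<Rightarrow> nat \<Rightarrow> (nat \<Rightarrow>\<^sub>0 nat) \<Rightarrow> (nat \<Rightarrow>\<^sub>0 nat)" where
  "emove i j a = a - Poly_Mapping.single i 1 + Poly_Mapping.single j 1"

definition borel_set :: "nat \<Rightarrow> nat \<Rightarrow> (nat \<Rightarrow>\<^sub>0 nat) set \<Rightarrow> bool" where
  "borel_set n r B \<longleftrightarrow> B \<subseteq> Pn1 n r \<and>
     (\<forall>a\<in>B. \<forall>i. 1 \<le> i \<and> i + 1 \<le> n \<and> 0 < Poly_Mapping.lookup a i \<longrightarrow> emove i (i+1) a \<in> B)"

definition dec_move :: "nat \<Rightarrow> (nat \<Rightarrow>\<^sub>0 nat) \<Rightarrow> (nat \<Rightarrow>\<^sub>0 nat) \<Rightarrow> bool" where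
  "dec_move n a b \<longleftrightarrow> (\<exists>j. 1 \<le> j \<and> j \<le> n \<and> 0 < Poly_Mapping.lookup a j \<and> b = emove j (j-1) a)"

definition mono_poly :: "(nat \<Rightarrow>\<^sub>0 nat) \<Rightarrow> 'k::field mpoly" where
  "mono_poly a = Poly_Mapping.single a 1"

definition poly_ring :: "nat set \<Rightarrow> 'k::field mpoly set" where
  "poly_ring V = {p. \<forall>a\<in>Poly_Mapping.keys p. Poly_Mapping.keys a \<subseteq> V}"

definition ideal_gen :: "nat set \<Rightarrow> 'k::field mpoly set \<Rightarrow> 'k mpoly set" where
  "ideal_gen V G = {p. \<exists>F c. finite F \<and> F \<subseteq> G \<and> (\<forall>g\<in>F. c g \<in> poly_ring V) \<and>
                          p = (\<Sum>g\<in>F. c g * g)}"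

text \<open>Saturation of an ideal I of K[x_1..x_n] with respect to m = (x_1,...,x_n):
  I : m^\<infinity> = {f \<in> K[x_1..x_n]. \<exists>k. m^k f \<subseteq> I}; m^k is generated by the monomials
  of degree k in x_1..x_n.\<close>
definition saturation :: "nat \<Rightarrow> 'k::field mpoly set \<Rightarrow> 'k mpoly set" where
  "saturation n I = {f \<in> poly_ring {1..n}.
      \<exists>k. \<forall>u\<in>monos_in {1..n} k. mono_poly u * f \<in> I}"

end

theory Submission
  imports Defs
begin

(*
  The key notion is that of a saturated monomial: a monomial m in x_1..x_n such that
  m * x_1^t is divisible by an element of Bbar for some t.  Since Bbar is Borel, a monomial
  of degree r lies in the extended saturated ideal iff it is divisible by a saturated monomial.

  (1) Every monomial of an ideal generated by G has some support monomial of G as divisor;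
      hence a monomial of the extended saturation is divisible by a saturated monomial.
  (2) Saturated monomials are closed under increasing moves, so "divisible by a saturated
      monomial" propagates backwards along decreasing moves.  A monomial of P^{n-1}_r outside
      Bbar has no saturated divisor (Borel dominance), so neither has anything it reaches.
  (3) Conversely, if x_0^k m (m in x_1..x_n) is outside the ideal then x_1^k m is outside
      Bbar (otherwise m is in the saturation), and x_1^k m reaches x_0^k m by k moves x_1 -> x_0.
*)

definition mdvd :: "(nat \<Rightarrow>\<^sub>0 nat) \<Rightarrow> (nat \<Rightarrow>\<^sub>0 nat) \<Rightarrow> bool" where
  "mdvd a b \<longleftrightarrow> (\<forall>i. Poly_Mapping.lookup a i \<le> Poly_Mapping.lookup b i)"

lemma mdvd_add: "mdvd y (x + y)"
  by (simp add: mdvd_def lookup_add)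

lemma keys_subset_iff: "Poly_Mapping.keys a \<subseteq> S \<longleftrightarrow> (\<forall>i. i \<notin> S \<longrightarrow> Poly_Mapping.lookup a i = 0)"
  by (auto simp: in_keys_iff)

lemma lookup_emove: "Poly_Mapping.lookup (emove i j a) k =
   (if k = i then Poly_Mapping.lookup a k - 1 else Poly_Mapping.lookup a k) + (if k = j then 1 else 0)"
  by (simp add: emove_def lookup_add lookup_minus lookup_single when_def)

lemma keys_emove: "Poly_Mapping.keys (emove i j a) \<subseteq> Poly_Mapping.keys a \<union> {j}"
  by (auto simp: in_keys_iff lookup_emove split: if_splits)

lemma mdeg_sum: "finite S \<Longrightarrow> Poly_Mapping.keys a \<subseteq> S \<Longrightarrow> mdeg a = sum (Poly_Mapping.lookup a) S"
  unfolding mdeg_def by (rule sum.mono_neutral_left) (auto simp: in_keys_iff)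

lemma mdeg_add: "mdeg (a + b) = mdeg a + mdeg b"
proof -
  let ?S = "Poly_Mapping.keys a \<union> Poly_Mapping.keys b"
  have "mdeg (a + b) = sum (Poly_Mapping.lookup (a + b)) ?S"
    using keys_add[of a b] by (intro mdeg_sum) auto
  also have "\<dots> = sum (Poly_Mapping.lookup a) ?S + sum (Poly_Mapping.lookup b) ?S"
    by (simp add: lookup_add sum.distrib)
  also have "\<dots> = mdeg a + mdeg b"
    by (subst (1 2) mdeg_sum[of ?S]) auto
  finally show ?thesis .
qed

lemma mdeg_single: "mdeg (Poly_Mapping.single i k) = k"
  by (subst mdeg_sum[of "{i}"]) auto

lemma mdeg_emove:
  assumes "0 < Poly_Mapping.lookup a i"
  shows "mdeg (emove i j a) = mdeg a"
proof -
  have "emove i j a + Poly_Mapping.single i 1 = a + Poly_Mapping.single j 1"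
    using assms by (intro poly_mapping_eqI) (auto simp: lookup_emove lookup_add lookup_single when_def)
  from arg_cong[OF this, of mdeg] show ?thesis by (simp add: mdeg_add mdeg_single)
qed

lemma split_x0:
  assumes "a \<in> Pn n r"
  obtains m k where "a = m + Poly_Mapping.single 0 k" "Poly_Mapping.keys m \<subseteq> {1..n}" "mdeg m + k = r"
proof
  define k where "k = Poly_Mapping.lookup a 0"
  define m where "m = a - Poly_Mapping.single 0 k"
  show am: "a = m + Poly_Mapping.single 0 k"
    unfolding m_def k_def by (rule poly_mapping_eqI) (auto simp: lookup_add lookup_minus lookup_single when_def)
  have ka: "Poly_Mapping.keys a \<subseteq> {0..n}" "mdeg a = r" using assms monos_in_def by auto
  show "Poly_Mapping.keys m \<subseteq> {1..n}"
    using ka(1) unfolding keys_subset_iff m_def k_def by (auto simp: lookup_minus lookup_single when_def)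
  show "mdeg m + k = r" using ka(2) am by (simp add: mdeg_add mdeg_single)
qed

lemma x1_power_in_Pn1:
  assumes "1 \<le> n" "Poly_Mapping.keys m \<subseteq> {1..n}" "mdeg m + k = r"
  shows "m + Poly_Mapping.single 1 k \<in> Pn1 n r"
  using assms keys_add[of m "Poly_Mapping.single 1 k"]
  by (auto simp: monos_in_def mdeg_add mdeg_single split: if_splits)

lemma dec_move_Pn: "dec_move n a b \<Longrightarrow> a \<in> Pn n r \<Longrightarrow> b \<in> Pn n r"
  unfolding dec_move_def monos_in_def using keys_emove mdeg_emove by fastforce

lemma dec_moves_Pn: "(dec_move n)\<^sup>*\<^sup>* a b \<Longrightarrow> a \<in> Pn n r \<Longrightarrow> b \<in> Pn n r"
  by (induction rule: rtranclp_induct) (auto intro: dec_move_Pn)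

lemma dec_moves_x1_to_x0:
  "1 \<le> n \<Longrightarrow> (dec_move n)\<^sup>*\<^sup>* (c + Poly_Mapping.single 1 t) (c + Poly_Mapping.single 0 t)"
proof (induction t arbitrary: c)
  case 0
  then show ?case by simp
next
  case (Suc t)
  let ?c = "c + Poly_Mapping.single 0 1"
  have "dec_move n (c + Poly_Mapping.single 1 (Suc t)) (?c + Poly_Mapping.single 1 t)"
    unfolding dec_move_def
  proof (intro exI[of _ 1] conjI)
    show "?c + Poly_Mapping.single 1 t = emove 1 (1 - 1) (c + Poly_Mapping.single 1 (Suc t))"
      by (rule poly_mapping_eqI) (auto simp: lookup_emove lookup_add lookup_single when_def)
  qed (use Suc in \<open>auto simp: lookup_add\<close>)
  moreover have "(dec_move n)\<^sup>*\<^sup>* (?c + Poly_Mapping.single 1 t) (?c + Poly_Mapping.single 0 t)"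
    using Suc by blast
  moreover have "?c + Poly_Mapping.single 0 t = c + Poly_Mapping.single 0 (Suc t)"
    by (rule poly_mapping_eqI) (auto simp: lookup_add lookup_single when_def)
  ultimately show ?case by (metis converse_rtranclp_into_rtranclp)
qed

section \<open>Borel sets\<close>

lemma borel_x1_to_xi:
  assumes B: "borel_set n r B" and b: "b \<in> B" and pos: "0 < Poly_Mapping.lookup b 1"
  shows "1 \<le> i \<Longrightarrow> i \<le> n \<Longrightarrow> emove 1 i b \<in> B"
proof (induction i rule: dec_induct)
  case base
  have "emove 1 1 b = b" using pos by (intro poly_mapping_eqI) (auto simp: lookup_emove)
  then show ?case using b by simp
next
  case (step i)
  have "emove i (i+1) (emove 1 i b) \<in> B"
    using B step unfolding borel_set_def by (auto simp: lookup_emove)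
  moreover have "emove i (i+1) (emove 1 i b) = emove 1 (Suc i) b"
    using step pos by (intro poly_mapping_eqI) (auto simp: lookup_emove)
  ultimately show ?case by simp
qed

lemma Pn1_degree: "1 \<le> n \<Longrightarrow> a \<in> Pn1 n r \<Longrightarrow>
    Poly_Mapping.lookup a 1 + (\<Sum>i=2..n. Poly_Mapping.lookup a i) = r"
proof -
  assume n: "1 \<le> n" and a: "a \<in> Pn1 n r"
  then have "r = sum (Poly_Mapping.lookup a) {1..n}" unfolding monos_in_def using mdeg_sum by auto
  also have "{1..n} = insert 1 {2..n}" using n by auto
  finally show ?thesis by simp
qed

text \<open>Borel dominance: if c \<in> P^{n-1}_r has at least the exponents of some b \<in> B in
  x_2..x_n, then c \<in> B (c is obtained from b by moving factors x_1 upwards).\<close>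
lemma borel_dominance:
  assumes B: "borel_set n r B" and n: "1 \<le> n"
  shows "b \<in> B \<Longrightarrow> c \<in> Pn1 n r \<Longrightarrow> \<forall>i\<ge>2. Poly_Mapping.lookup b i \<le> Poly_Mapping.lookup c i \<Longrightarrow> c \<in> B"
proof (induction "\<Sum>i=2..n. Poly_Mapping.lookup c i - Poly_Mapping.lookup b i" arbitrary: b rule: less_induct)
  case less
  have bP: "b \<in> Pn1 n r" using less B borel_set_def by auto
  note sb = Pn1_degree[OF n bP] and sc = Pn1_degree[OF n less(3)]
  show ?case
  proof (cases "\<forall>i\<in>{2..n}. Poly_Mapping.lookup b i = Poly_Mapping.lookup c i")
    case True
    then have "(\<Sum>i=2..n. Poly_Mapping.lookup b i) = (\<Sum>i=2..n. Poly_Mapping.lookup c i)"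
      by (intro sum.cong) auto
    with sb sc have x1: "Poly_Mapping.lookup b 1 = Poly_Mapping.lookup c 1" by simp
    have outside: "\<And>i. i \<notin> {1..n} \<Longrightarrow> Poly_Mapping.lookup b i = 0 \<and> Poly_Mapping.lookup c i = 0"
      using bP less(3) unfolding monos_in_def keys_subset_iff by auto
    have "b = c"
    proof (intro poly_mapping_eqI)
      fix i show "Poly_Mapping.lookup b i = Poly_Mapping.lookup c i"
        using True x1 outside
        by (cases "i \<in> {1..n}"; cases "i = 1") auto
    qed
    then show ?thesis using less by simp
  next
    case False
    then obtain i where i: "i \<in> {2..n}" and lt: "Poly_Mapping.lookup b i < Poly_Mapping.lookup c i"
      using less(4) le_neq_implies_less by fastforce
    have "(\<Sum>i=2..n. Poly_Mapping.lookup b i) < (\<Sum>i=2..n. Poly_Mapping.lookup c i)"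
      using i lt less(4) by (intro sum_strict_mono_ex1) auto
    with sb sc have "0 < Poly_Mapping.lookup b 1" by linarith
    then have "emove 1 i b \<in> B" using borel_x1_to_xi[OF B less(2)] i by auto
    moreover have "\<forall>k\<ge>2. Poly_Mapping.lookup (emove 1 i b) k \<le> Poly_Mapping.lookup c k"
      using less(4) lt by (auto simp: lookup_emove)
    moreover have "(\<Sum>k=2..n. Poly_Mapping.lookup c k - Poly_Mapping.lookup (emove 1 i b) k)
        < (\<Sum>k=2..n. Poly_Mapping.lookup c k - Poly_Mapping.lookup b k)"
      using i lt by (intro sum_strict_mono_ex1) (auto simp: lookup_emove)
    ultimately show ?thesis using less(1)[OF _ _ less(3)] by blast
  qed
qed

lemma borel_multiples_increasing_move:
  assumes B: "borel_set n r B" and b: "b \<in> B" and d: "mdvd b c" and pos: "0 < Poly_Mapping.lookup c i"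
    and i: "1 \<le> i" "i + 1 \<le> n"
  shows "\<exists>b'\<in>B. mdvd b' (emove i (i+1) c)"
proof (cases "Poly_Mapping.lookup b i < Poly_Mapping.lookup c i")
  case True
  have "mdvd b (emove i (i+1) c)" unfolding mdvd_def
  proof
    fix k have "Poly_Mapping.lookup b k \<le> Poly_Mapping.lookup c k" using d mdvd_def by auto
    then show "Poly_Mapping.lookup b k \<le> Poly_Mapping.lookup (emove i (i+1) c) k"
      using True by (auto simp: lookup_emove)
  qed
  then show ?thesis using b by blast
next
  case False
  then have eq: "Poly_Mapping.lookup b i = Poly_Mapping.lookup c i"
    using d unfolding mdvd_def by (meson le_antisym not_less)
  then have "emove i (i+1) b \<in> B" using B b pos i unfolding borel_set_def by auto
  moreover have "mdvd (emove i (i+1) b) (emove i (i+1) c)"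
    using d eq unfolding mdvd_def by (auto simp: lookup_emove)
  ultimately show ?thesis by blast
qed

section \<open>Saturated monomials\<close>

text \<open>m is saturated if it lies in x_1..x_n and m x_1^t is a multiple of an element of B for
  some t; for Borel B these are the monomials of the saturation of <B>.\<close>
definition sat_mono :: "nat \<Rightarrow> (nat \<Rightarrow>\<^sub>0 nat) set \<Rightarrow> (nat \<Rightarrow>\<^sub>0 nat) \<Rightarrow> bool" where
  "sat_mono n B m \<longleftrightarrow> Poly_Mapping.keys m \<subseteq> {1..n} \<and> (\<exists>t. \<exists>b\<in>B. mdvd b (m + Poly_Mapping.single 1 t))"

lemma sat_mono_increasing_move:
  assumes B: "borel_set n r B" and T: "sat_mono n B m" and pos: "0 < Poly_Mapping.lookup m i"
    and i: "1 \<le> i" "i + 1 \<le> n"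
  shows "sat_mono n B (emove i (i+1) m)"
proof -
  obtain t b where b: "b \<in> B" "mdvd b (m + Poly_Mapping.single 1 t)" using T sat_mono_def by auto
  have "0 < Poly_Mapping.lookup (m + Poly_Mapping.single 1 t) i" using pos by (simp add: lookup_add)
  then obtain b' where "b' \<in> B" "mdvd b' (emove i (i+1) (m + Poly_Mapping.single 1 t))"
    using borel_multiples_increasing_move[OF B b] i by blast
  moreover have "emove i (i+1) (m + Poly_Mapping.single 1 t) = emove i (i+1) m + Poly_Mapping.single 1 t"
    using pos by (intro poly_mapping_eqI) (auto simp: lookup_emove lookup_add lookup_single when_def)
  moreover have "Poly_Mapping.keys (emove i (i+1) m) \<subseteq> {1..n}"
    using keys_emove[of i "i+1" m] T i unfolding sat_mono_def by auto
  ultimately show ?thesis unfolding sat_mono_def by auto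
qed

text \<open>If a decreasing move takes a to a' and a' has a saturated divisor, then so has a:
  either the divisor already divides a, or its image under the inverse (increasing) move does.\<close>
lemma sat_divisor_backwards:
  assumes B: "borel_set n r B" and mv: "dec_move n a a'" and T: "sat_mono n B m" and d: "mdvd m a'"
  shows "\<exists>m'. sat_mono n B m' \<and> mdvd m' a"
proof -
  obtain j where j: "1 \<le> j" "j \<le> n" "0 < Poly_Mapping.lookup a j" "a' = emove j (j-1) a"
    using mv dec_move_def by auto
  have d': "\<And>k. Poly_Mapping.lookup m k \<le> Poly_Mapping.lookup a' k" using d mdvd_def by auto
  show ?thesis
  proof (cases "Poly_Mapping.lookup m (j-1) \<le> Poly_Mapping.lookup a (j-1)")
    case True
    have "mdvd m a" unfolding mdvd_def
    proof
      fix k show "Poly_Mapping.lookup m k \<le> Poly_Mapping.lookup a k"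
        using d'[of k] True j by (auto simp: lookup_emove split: if_splits)
    qed
    then show ?thesis using T by blast
  next
    case False
    have "Poly_Mapping.lookup m 0 = 0" using T unfolding sat_mono_def keys_subset_iff by auto
    then have j1: "1 \<le> j - 1" using False by (cases "j = 1") auto
    have "sat_mono n B (emove (j-1) j m)"
      using sat_mono_increasing_move[OF B T _ j1] False j by simp
    moreover have "mdvd (emove (j-1) j m) a" unfolding mdvd_def
    proof
      fix k show "Poly_Mapping.lookup (emove (j - 1) j m) k \<le> Poly_Mapping.lookup a k"
        using d'[of k] False j j1 by (auto simp: lookup_emove split: if_splits; linarith)
    qed
    ultimately show ?thesis by blast
  qed
qed

lemma complement_no_sat_divisor:
  assumes B: "borel_set n r B" and n: "1 \<le> n" and a: "a \<in> Pn1 n r" "a \<notin> B"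
  shows "\<not> (\<exists>m. sat_mono n B m \<and> mdvd m a)"
proof
  assume "\<exists>m. sat_mono n B m \<and> mdvd m a"
  then obtain m t b where b: "b \<in> B" "mdvd b (m + Poly_Mapping.single 1 t)" "mdvd m a"
    using sat_mono_def by auto
  have "\<forall>i\<ge>2. Poly_Mapping.lookup b i \<le> Poly_Mapping.lookup a i"
  proof (intro allI impI)
    fix i :: nat assume "2 \<le> i"
    moreover have "Poly_Mapping.lookup b i \<le> Poly_Mapping.lookup (m + Poly_Mapping.single 1 t) i"
      "Poly_Mapping.lookup m i \<le> Poly_Mapping.lookup a i" using b mdvd_def by auto
    ultimately show "Poly_Mapping.lookup b i \<le> Poly_Mapping.lookup a i"
      by (simp add: lookup_add lookup_single)
  qed
  then have "a \<in> B" using borel_dominance[OF B n b(1) a(1)] by simp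
  with a show False by simp
qed

lemma no_sat_divisor_along_dec_moves:
  assumes B: "borel_set n r B" and "(dec_move n)\<^sup>*\<^sup>* a b"
  shows "\<not> (\<exists>m. sat_mono n B m \<and> mdvd m a) \<Longrightarrow> \<not> (\<exists>m. sat_mono n B m \<and> mdvd m b)"
  using assms(2) by (induction rule: rtranclp_induct) (use sat_divisor_backwards[OF B] in blast)+

lemma keys_mono_poly [simp]: "Poly_Mapping.keys (mono_poly a :: 'k::field mpoly) = {a}"
  by (simp add: mono_poly_def)

lemma mono_poly_ring: "Poly_Mapping.keys a \<subseteq> V \<Longrightarrow> (mono_poly a :: 'k::field mpoly) \<in> poly_ring V"
  by (simp add: poly_ring_def)

lemma mono_poly_mult: "mono_poly a * mono_poly b = (mono_poly (a + b) :: 'k::field mpoly)"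
  by (simp add: mono_poly_def mult_single)

lemma ideal_gen_generator_multiple:
  "c \<in> poly_ring V \<Longrightarrow> g \<in> G \<Longrightarrow> (c * g :: 'k::field mpoly) \<in> ideal_gen V G"
  unfolding ideal_gen_def by (rule CollectI, rule exI[of _ "{g}"], rule exI[of _ "\<lambda>_. c"]) auto

lemma lookup_mono_poly_mult:
  "Poly_Mapping.lookup (mono_poly u * g) (u + y) = Poly_Mapping.lookup (g :: 'k::field mpoly) y"
proof -
  have cancel: "u + y = u + q \<longleftrightarrow> y = q" for q :: "nat \<Rightarrow>\<^sub>0 nat"
    by (metis add_diff_cancel_left')
  have "(\<Sum>a. (1 when u = a) * (\<Sum>q. Poly_Mapping.lookup g q when u + y = a + q))
     = (\<Sum>a. if u = a then (\<Sum>q. Poly_Mapping.lookup g q when u + y = a + q) else 0)"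
    by (rule Sum_any.cong) (auto simp: when_def)
  also have "\<dots> = (\<Sum>q. Poly_Mapping.lookup g q when u + y = u + q)"
    by (rule Sum_any.delta')
  also have "\<dots> = (\<Sum>q. if y = q then Poly_Mapping.lookup g q else 0)"
    by (rule Sum_any.cong) (auto simp: when_def cancel)
  also have "\<dots> = Poly_Mapping.lookup g y" by (rule Sum_any.delta')
  finally show ?thesis unfolding lookup_mult mono_poly_def by (simp add: lookup_single)
qed

lemma keys_ideal_gen:
  assumes p: "(p :: 'k::field mpoly) \<in> ideal_gen V G" and x: "x \<in> Poly_Mapping.keys p"
  shows "\<exists>g\<in>G. \<exists>y\<in>Poly_Mapping.keys g. mdvd y x"
proof -
  obtain F c where F: "finite F" "F \<subseteq> G" "p = (\<Sum>g\<in>F. c g * g)"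
    using p unfolding ideal_gen_def by blast
  then obtain g where g: "g \<in> F" "x \<in> Poly_Mapping.keys (c g * g)"
    using subsetD[OF keys_sum[of "\<lambda>g. c g * g" F]] x by auto
  then obtain a y where "x = a + y" "y \<in> Poly_Mapping.keys g"
    using subsetD[OF keys_mult g(2)] by auto
  then show ?thesis using g F mdvd_add by blast
qed

text \<open>A monomial of the extended saturation is divisible by a saturated monomial: a support
  monomial y of an element g of the saturation satisfies x_1^k y \<in> <B> for some k.\<close>
lemma extended_saturation_sat_divisor:
  assumes n: "1 \<le> n"
    and mem: "(mono_poly a :: 'k::field mpoly) \<in> ideal_gen {0..n} (saturation n (ideal_gen {1..n} (mono_poly ` B)))"
  shows "\<exists>m. sat_mono n B m \<and> mdvd m a"
proof -
  obtain g y where g: "g \<in> (saturation n (ideal_gen {1..n} (mono_poly ` B)) :: 'k mpoly set)"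
      "y \<in> Poly_Mapping.keys g" "mdvd y a"
    using keys_ideal_gen[OF mem, of a] by auto
  have ky: "Poly_Mapping.keys y \<subseteq> {1..n}" using g unfolding saturation_def poly_ring_def by auto
  obtain k where k: "\<forall>u\<in>monos_in {1..n} k. mono_poly u * g \<in> ideal_gen {1..n} (mono_poly ` B)"
    using g unfolding saturation_def by auto
  let ?u = "Poly_Mapping.single 1 k"
  have "?u \<in> monos_in {1..n} k" using n by (auto simp: monos_in_def mdeg_single)
  then have "mono_poly ?u * g \<in> ideal_gen {1..n} (mono_poly ` B)" using k by blast
  moreover have "?u + y \<in> Poly_Mapping.keys (mono_poly ?u * g)"
    using g(2) by (simp add: in_keys_iff lookup_mono_poly_mult)
  ultimately obtain b where "b \<in> B" "mdvd b (?u + y)"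
    using keys_ideal_gen by fastforce
  then have "sat_mono n B y" using ky unfolding sat_mono_def by (metis add.commute)
  then show ?thesis using g(3) by blast
qed

text \<open>Conversely, if x_1^k m \<in> B then m is in the saturation (by Borel dominance every degree-k
  multiple of m is in B), so x_0^k m lies in the extended saturation.\<close>
lemma x0_power_in_extended_saturation:
  assumes B: "borel_set n r B" and n: "1 \<le> n"
    and m: "Poly_Mapping.keys m \<subseteq> {1..n}" "mdeg m + k = r"
    and mB: "m + Poly_Mapping.single 1 k \<in> B"
  shows "(mono_poly (m + Poly_Mapping.single 0 k) :: 'k::field mpoly)
           \<in> ideal_gen {0..n} (saturation n (ideal_gen {1..n} (mono_poly ` B)))"
proof -
  have sat: "(mono_poly m :: 'k mpoly) \<in> saturation n (ideal_gen {1..n} (mono_poly ` B))"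
    unfolding saturation_def
  proof (intro CollectI conjI exI[of _ k] ballI)
    show "(mono_poly m :: 'k mpoly) \<in> poly_ring {1..n}" using m(1) by (rule mono_poly_ring)
    fix u assume u: "u \<in> monos_in {1..n} k"
    have "u + m \<in> Pn1 n r" using u m keys_add[of u m]
      unfolding monos_in_def by (auto simp: mdeg_add)
    then have "u + m \<in> B"
      using borel_dominance[OF B n mB] by (auto simp: lookup_add lookup_single)
    then have "mono_poly 0 * mono_poly (u + m) \<in> ideal_gen {1..n} (mono_poly ` B :: 'k mpoly set)"
      by (intro ideal_gen_generator_multiple mono_poly_ring) auto
    then show "mono_poly u * mono_poly m \<in> ideal_gen {1..n} (mono_poly ` B :: 'k mpoly set)"
      by (simp add: mono_poly_mult)
  qed
  have "(mono_poly (Poly_Mapping.single 0 k) :: 'k mpoly) \<in> poly_ring {0..n}"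
    by (rule mono_poly_ring) auto
  from ideal_gen_generator_multiple[OF this sat] show ?thesis
    by (simp add: mono_poly_mult add.commute)
qed

lemma dec_moves_from_complement_avoid_ideal:
  assumes n: "1 \<le> n" and B: "borel_set n r B"
    and a: "a \<in> Pn1 n r" "a \<notin> B" and ab: "(dec_move n)\<^sup>*\<^sup>* a b"
  shows "b \<in> Pn n r"
    and "(mono_poly b :: 'k::field mpoly) \<notin> ideal_gen {0..n} (saturation n (ideal_gen {1..n} (mono_poly ` B)))"
proof -
  have "a \<in> Pn n r" using a(1) unfolding monos_in_def by auto
  then show "b \<in> Pn n r" using dec_moves_Pn ab by blast
  show "(mono_poly b :: 'k::field mpoly) \<notin> ideal_gen {0..n} (saturation n (ideal_gen {1..n} (mono_poly ` B)))"
    using no_sat_divisor_along_dec_moves[OF B ab complement_no_sat_divisor[OF B n a]]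
      extended_saturation_sat_divisor[OF n] by blast
qed

lemma outside_ideal_reached_from_complement:
  assumes n: "1 \<le> n" and B: "borel_set n r B" and a: "a \<in> Pn n r"
    and out: "(mono_poly a :: 'k::field mpoly) \<notin> ideal_gen {0..n} (saturation n (ideal_gen {1..n} (mono_poly ` B)))"
  shows "\<exists>a0\<in>Pn1 n r - B. (dec_move n)\<^sup>*\<^sup>* a0 a"
proof -
  obtain m k where a_eq: "a = m + Poly_Mapping.single 0 k"
    and m: "Poly_Mapping.keys m \<subseteq> {1..n}" "mdeg m + k = r"
    using split_x0[OF a] by blast
  have "m + Poly_Mapping.single 1 k \<notin> B"
    using x0_power_in_extended_saturation[OF B n m] out a_eq by blast
  moreover have "m + Poly_Mapping.single 1 k \<in> Pn1 n r" using x1_power_in_Pn1[OF n m] .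
  ultimately show ?thesis using dec_moves_x1_to_x0[OF n, of m k] a_eq by blast
qed

theorem lemma4p1:
  fixes n r :: nat and Bbar :: "(nat \<Rightarrow>\<^sub>0 nat) set"
  assumes "1 \<le> n"
    and "borel_set n r Bbar"
  shows "{b. \<exists>a\<in>Pn1 n r - Bbar. (dec_move n)\<^sup>*\<^sup>* a b}
         = Pn n r - {a \<in> Pn n r. (mono_poly a :: 'k::field mpoly)
              \<in> ideal_gen {0..n} (saturation n (ideal_gen {1..n} (mono_poly ` Bbar)))}"
  using dec_moves_from_complement_avoid_ideal[OF assms]
    outside_ideal_reached_from_complement[OF assms]
  by blast

end
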